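(* For every integer $n\ge 5$, up to isomorphism, \[\operatorname{obs}(C_n)=\operatorname{obs}(P_{n-1})\setminus\{C_n\}\quad\text{and}\quad\operatorname{obs}(P_{n-1})=\operatorname{obs}(C_n)\cup\{C_n\}.\]
   Context: All graphs are finite, simple and loopless. $P_n$ and $C_n$ denote the path and cycle on $n$ vertices. A full-homomorphism $\varphi\colon G\to H$ is a map $V(G)\to V(H)$ such that for all $x,y\in V(G)$, $xy\in E(G)$ if and only if $\varphi(x)\varphi(y)\in E(H)$. A full $H$-colouring of $G$ is a full-homomorphism $G\to H$. A minimal $H$-obstruction is a graph $G$ that admits no full $H$-colouring while every proper induced subgraph of $G$ admits one; $\operatorname{obs}(H)$ denotes the set of minimal $H$-obstructions (up to isomorphism). *)

theory Defs
  imports Main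
begin

definition is_graph :: "'a set \<Rightarrow> ('a \<times> 'a) set \<Rightarrow> bool" where
  "is_graph V E \<longleftrightarrow> finite V \<and> E \<subseteq> V \<times> V \<and> sym E \<and> (\<forall>x. (x, x) \<notin> E)"

definition full_hom ::
  "'a set \<Rightarrow> ('a \<times> 'a) set \<Rightarrow> 'b set \<Rightarrow> ('b \<times> 'b) set \<Rightarrow> ('a \<Rightarrow> 'b) \<Rightarrow> bool" where
  "full_hom VG EG VH EH f \<longleftrightarrow>
     f ` VG \<subseteq> VH \<and> (\<forall>x\<in>VG. \<forall>y\<in>VG. (x, y) \<in> EG \<longleftrightarrow> (f x, f y) \<in> EH)"

definition full_colourable ::
  "'a set \<Rightarrow> ('a \<times> 'a) set \<Rightarrow> 'b set \<Rightarrow> ('b \<times> 'b) set \<Rightarrow> bool" where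
  "full_colourable VG EG VH EH \<longleftrightarrow> (\<exists>f. full_hom VG EG VH EH f)"

definition min_obstruction ::
  "'a set \<Rightarrow> ('a \<times> 'a) set \<Rightarrow> 'b set \<Rightarrow> ('b \<times> 'b) set \<Rightarrow> bool" where
  "min_obstruction VG EG VH EH \<longleftrightarrow>
     is_graph VG EG \<and> \<not> full_colourable VG EG VH EH \<and>
     (\<forall>S. S \<subset> VG \<longrightarrow> full_colourable S (EG \<inter> S \<times> S) VH EH)"

definition graph_iso ::
  "'a set \<Rightarrow> ('a \<times> 'a) set \<Rightarrow> 'b set \<Rightarrow> ('b \<times> 'b) set \<Rightarrow> bool" where
  "graph_iso VG EG VH EH \<longleftrightarrow>
     (\<exists>f. bij_betw f VG VH \<and> (\<forall>x\<in>VG. \<forall>y\<in>VG. (x, y) \<in> EG \<longleftrightarrow> (f x, f y) \<in> EH))"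

definition path_V :: "nat \<Rightarrow> nat set" where "path_V m = {0..<m}"
definition path_E :: "nat \<Rightarrow> (nat \<times> nat) set" where
  "path_E m = {(i, j). i < m \<and> j < m \<and> (j = i + 1 \<or> i = j + 1)}"

definition cycle_V :: "nat \<Rightarrow> nat set" where "cycle_V n = {0..<n}"
definition cycle_E :: "nat \<Rightarrow> (nat \<times> nat) set" where
  "cycle_E n = {(i, j). i < n \<and> j < n \<and> i \<noteq> j \<and> (j = (i + 1) mod n \<or> i = (j + 1) mod n)}"

end

theory Submission
  imports Defs
begin

text \<open>
  A full \<open>C\<^sub>n\<close>-colouring that misses some colour can be rotated so that it misses \<open>n - 1\<close>, i.e.
  it becomes a full \<open>P\<^sub>n\<^sub>-\<^sub>1\<close>-colouring; a surjective one picks out an induced \<open>C\<^sub>n\<close>. For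
  \<open>n \<ge> 5\<close> distinct vertices of \<open>C\<^sub>n\<close> have distinct neighbourhoods, so every full
  \<open>C\<^sub>n\<close>-colouring is bijective on an induced \<open>C\<^sub>n\<close>, and a graph containing one has no full
  \<open>P\<^sub>n\<^sub>-\<^sub>1\<close>-colouring. Everything then reduces to one extension property: if \<open>G\<close>
  contains an induced \<open>C\<^sub>n\<close> on \<open>Z\<close> and every proper induced subgraph of \<open>G\<close> is
  \<open>C\<^sub>n\<close>-colourable, then so is \<open>G\<close>. Indeed every vertex \<open>x\<close> has a twin in \<open>Z\<close>, a vertex with
  the same neighbours in \<open>Z\<close> (found by colouring \<open>G - z\<close> for each \<open>z \<in> Z\<close>), and sending
  every vertex to its twin preserves adjacency (checked by exchanging \<open>x\<close> with its twin \<open>a\<close>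
  and colouring \<open>G - a\<close>).
\<close>

section \<open>Neighbourhoods in the cycle\<close>

definition cyc_succ :: "nat \<Rightarrow> nat \<Rightarrow> nat" where
  "cyc_succ n a = (if Suc a = n then 0 else Suc a)"

definition cyc_pred :: "nat \<Rightarrow> nat \<Rightarrow> nat" where
  "cyc_pred n a = (if a = 0 then n - 1 else a - 1)"

lemma cyc_succ_lt: "a < n \<Longrightarrow> cyc_succ n a < n"
  by (auto simp: cyc_succ_def)

lemma cyc_pred_lt: "a < n \<Longrightarrow> cyc_pred n a < n"
  by (auto simp: cyc_pred_def)

lemma cyc_succ_pred: "a < n \<Longrightarrow> cyc_succ n (cyc_pred n a) = a"
  by (auto simp: cyc_succ_def cyc_pred_def)

lemma cyc_pred_succ: "a < n \<Longrightarrow> cyc_pred n (cyc_succ n a) = a"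
  by (auto simp: cyc_succ_def cyc_pred_def)

lemma cyc_succ_neq: "2 \<le> n \<Longrightarrow> cyc_succ n a \<noteq> a"
  by (auto simp: cyc_succ_def)

lemma cyc_succ_neq_pred: "3 \<le> n \<Longrightarrow> a < n \<Longrightarrow> cyc_succ n a \<noteq> cyc_pred n a"
  by (auto simp: cyc_succ_def cyc_pred_def)

lemma cyc_succ3_neq: "4 \<le> n \<Longrightarrow> a < n \<Longrightarrow> cyc_succ n (cyc_succ n (cyc_succ n a)) \<noteq> a"
  by (auto simp: cyc_succ_def)

lemma cyc_succ4_neq: "5 \<le> n \<Longrightarrow> a < n \<Longrightarrow> cyc_succ n (cyc_succ n (cyc_succ n (cyc_succ n a))) \<noteq> a"
  by (auto simp: cyc_succ_def)

lemma cycle_E_iff: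
  assumes "3 \<le> n"
  shows "(a, b) \<in> cycle_E n \<longleftrightarrow> a < n \<and> b < n \<and> (b = cyc_succ n a \<or> a = cyc_succ n b)"
proof -
  have "i < n \<Longrightarrow> Suc i mod n = cyc_succ n i" for i
    by (auto simp: cyc_succ_def)
  then show ?thesis
    using assms cyc_succ_neq[of n a] cyc_succ_neq[of n b] by (auto simp: cycle_E_def)
qed

lemma cycle_E_sym: "(a, b) \<in> cycle_E n \<longleftrightarrow> (b, a) \<in> cycle_E n"
  by (auto simp: cycle_E_def)

lemma cycle_E_Image_subset: "cycle_E n `` {a} \<subseteq> {0..<n}"
  by (auto simp: cycle_E_def)

lemma finite_cycle_E_Image [simp]: "finite (cycle_E n `` {a})"
  by (rule finite_subset[OF cycle_E_Image_subset]) simp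

lemma cycle_E_Image:
  "3 \<le> n \<Longrightarrow> a < n \<Longrightarrow> cycle_E n `` {a} = {cyc_succ n a, cyc_pred n a}"
  by (auto simp: cycle_E_iff cyc_succ_lt cyc_pred_lt cyc_succ_pred) (metis cyc_pred_succ)

lemma cycle_E_Image_inj:
  assumes "5 \<le> n" "a < n" "b < n" and eq: "cycle_E n `` {a} = cycle_E n `` {b}"
  shows "a = b"
proof (rule ccontr)
  assume "a \<noteq> b"
  have nbrs: "{cyc_succ n a, cyc_pred n a} = {cyc_succ n b, cyc_pred n b}"
    using eq assms by (simp add: cycle_E_Image)
  have "b = cyc_succ n (cyc_succ n a)"
    using nbrs \<open>a \<noteq> b\<close> assms by (metis cyc_pred_succ cyc_succ_pred doubleton_eq_iff)
  moreover have "a = cyc_succ n (cyc_succ n b)"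
    using nbrs \<open>a \<noteq> b\<close> assms by (metis cyc_pred_succ cyc_succ_pred doubleton_eq_iff)
  ultimately show False
    using cyc_succ4_neq assms by metis
qed

lemma Diff_singleton_eq_imp_eq:
  assumes fin: "finite X" and card: "card X = card Y" and eq: "X - {m} = Y - {m}"
  shows "X = Y"
proof -
  let ?D = "X - {m}"
  have "X = ?D \<or> X = insert m ?D" "Y = ?D \<or> Y = insert m ?D"
    using eq by blast+
  moreover have "card (insert m ?D) = Suc (card ?D)"
    using fin by (intro card_insert_disjoint) auto
  ultimately show ?thesis
    using card by (metis n_not_Suc_n)
qed

lemma cycle_E_Image_Diff_inj:
  assumes "5 \<le> n" "a < n" "b < n" "cycle_E n `` {a} - {m} = cycle_E n `` {b} - {m}"
  shows "a = b"
proof -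
  have "card (cycle_E n `` {a}) = card (cycle_E n `` {b})"
    using assms by (simp add: cycle_E_Image cyc_succ_neq_pred)
  then show ?thesis
    using assms Diff_singleton_eq_imp_eq cycle_E_Image_inj by (metis finite_cycle_E_Image)
qed

lemma card_cycle_E_Image_Diff_eq_1_iff:
  assumes "3 \<le> n" "a < n" "m \<noteq> a"
  shows "card (cycle_E n `` {a} - {m}) = 1 \<longleftrightarrow> m \<in> cycle_E n `` {a}"
  using assms cyc_succ_neq_pred[of n a] by (simp add: cycle_E_Image insert_Diff_if)

lemma cycle_no_triangle:
  assumes "4 \<le> n" "q < n" "a < n" "(q, a) \<in> cycle_E n" "(q, cyc_succ n a) \<in> cycle_E n"
  shows False
  using assms cyc_succ3_neq[of n q] cyc_succ_neq[of n] cyc_pred_succ[of q n] cyc_succ_pred[of q n]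
  by (auto simp: cycle_E_iff)

lemma card_cycle_E_Image: "3 \<le> n \<Longrightarrow> a < n \<Longrightarrow> card (cycle_E n `` {a}) = 2"
  by (simp add: cycle_E_Image cyc_succ_neq_pred)

lemma atLeastLessThan_Diff_neq_cycle_E_Image_Diff:
  assumes "5 \<le> n" "q < n"
  shows "{0..<n} - {p} \<noteq> cycle_E n `` {q} - {p}"
proof
  assume "{0..<n} - {p} = cycle_E n `` {q} - {p}"
  then have "card ({0..<n} - {p}) \<le> card (cycle_E n `` {q})"
    by (simp add: card_mono)
  then show False
    using card_cycle_E_Image[of n q] assms by (simp add: card_Diff_singleton_if split: if_splits)
qed

lemma singleton_neq_cycle_E_Image_Diff_succ:
  assumes n: "5 \<le> n" and "u < n" "q < n"
  shows "{u} \<noteq> cycle_E n `` {q} - {cyc_succ n u}"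
proof
  assume eq: "{u} = cycle_E n `` {q} - {cyc_succ n u}"
  have "cyc_succ n u \<noteq> u"
    using cyc_succ_neq n by simp
  then have "cycle_E n `` {q} = {u, cyc_succ n u}"
    using eq card_cycle_E_Image[of n q] assms by (intro card_subset_eq) auto
  then have "(q, u) \<in> cycle_E n" "(q, cyc_succ n u) \<in> cycle_E n"
    by auto
  then show False
    using cycle_no_triangle[of n q u] assms by simp
qed

lemma cycle_E_Image_if_almost:
  assumes n: "5 \<le> n" and N: "N \<subseteq> {0..<n}"
    and almost: "\<And>p. p < n \<Longrightarrow> \<exists>q<n. N - {p} = cycle_E n `` {q} - {p}"
  shows "\<exists>q<n. N = cycle_E n `` {q}"
proof -
  have "N \<noteq> {0..<n}"
    using almost[of 0] atLeastLessThan_Diff_neq_cycle_E_Image_Diff[OF n] n by auto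
  then obtain p where p: "p < n" "p \<notin> N"
    using N by (metis atLeastLessThan_iff subsetI subset_antisym zero_le)
  obtain q where q: "q < n" "N = cycle_E n `` {q} - {p}"
    using almost[OF p(1)] p(2) by auto
  show ?thesis
  proof (cases "p \<in> cycle_E n `` {q}")
    case False
    then show ?thesis
      using q by auto
  next
    case True
    then have "card N = 1"
      using q n card_cycle_E_Image[of n q] by (simp add: card_Diff_singleton_if)
    then obtain u where u: "N = {u}"
      using card_1_singletonE by blast
    then have "u < n" "cyc_succ n u < n" "cyc_succ n u \<noteq> u"
      using N n cyc_succ_lt cyc_succ_neq by auto
    then show ?thesis
      using almost[of "cyc_succ n u"] singleton_neq_cycle_E_Image_Diff_succ[OF n \<open>u < n\<close>] u by auto
  qed
qed

section \<open>Colourings by cycles and paths\<close>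

lemma full_hom_comp:
  "full_hom VG EG VH EH f \<Longrightarrow> full_hom VH EH VK EK g \<Longrightarrow> full_hom VG EG VK EK (g \<circ> f)"
  unfolding full_hom_def by (auto simp: image_subset_iff)

lemma full_hom_induced_subgraph_iff:
  "VH' \<subseteq> VH \<Longrightarrow>
     full_hom VG EG VH' (EH \<inter> VH' \<times> VH') f \<longleftrightarrow> full_hom VG EG VH EH f \<and> f ` VG \<subseteq> VH'"
  unfolding full_hom_def by (auto simp: image_subset_iff)

lemma path_E_eq: "3 \<le> n \<Longrightarrow> path_E (n - 1) = cycle_E n \<inter> path_V (n - 1) \<times> path_V (n - 1)"
  by (auto simp: path_E_def path_V_def cycle_E_iff cyc_succ_def split: if_splits)

lemma path_V_subset: "path_V (n - 1) \<subseteq> cycle_V n"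
  by (auto simp: path_V_def cycle_V_def)

lemma full_hom_path_imp_cycle:
  "3 \<le> n \<Longrightarrow> full_hom S F (path_V (n - 1)) (path_E (n - 1)) f \<Longrightarrow>
     full_hom S F (cycle_V n) (cycle_E n) f"
  using full_hom_induced_subgraph_iff[OF path_V_subset[of n], of S F "cycle_E n" f] path_E_eq[of n]
  by simp

text \<open>The rotation of \<open>C\<^sub>n\<close> that sends \<open>k\<close> to \<open>n - 1\<close>.\<close>

definition cycle_rot :: "nat \<Rightarrow> nat \<Rightarrow> nat \<Rightarrow> nat" where
  "cycle_rot n k c = (if k < c then c - Suc k else c + n - Suc k)"

lemma cycle_rot_lt: "k < n \<Longrightarrow> c < n \<Longrightarrow> cycle_rot n k c < n"
  by (auto simp: cycle_rot_def)

lemma cycle_rot_self: "k < n \<Longrightarrow> cycle_rot n k k = n - 1"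
  by (simp add: cycle_rot_def)

lemma cycle_rot_inj: "k < n \<Longrightarrow> inj_on (cycle_rot n k) {0..<n}"
  unfolding inj_on_def cycle_rot_def by auto

lemma cycle_rot_succ: "k < n \<Longrightarrow> c < n \<Longrightarrow> cycle_rot n k (cyc_succ n c) = cyc_succ n (cycle_rot n k c)"
  unfolding cycle_rot_def cyc_succ_def by auto

lemma full_hom_cycle_rot:
  assumes "3 \<le> n" "k < n"
  shows "full_hom (cycle_V n) (cycle_E n) (cycle_V n) (cycle_E n) (cycle_rot n k)"
  unfolding full_hom_def
proof (intro conjI ballI)
  show "cycle_rot n k ` cycle_V n \<subseteq> cycle_V n"
    using assms by (auto simp: cycle_V_def cycle_rot_lt)
  fix a b
  assume "a \<in> cycle_V n" "b \<in> cycle_V n"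
  then have ab: "a < n" "b < n"
    by (auto simp: cycle_V_def)
  have "b = cyc_succ n a \<longleftrightarrow> cycle_rot n k b = cycle_rot n k (cyc_succ n a)"
   and "a = cyc_succ n b \<longleftrightarrow> cycle_rot n k a = cycle_rot n k (cyc_succ n b)"
    using cycle_rot_inj[OF assms(2)] ab cyc_succ_lt by (auto dest: inj_onD)
  then show "(a, b) \<in> cycle_E n \<longleftrightarrow> (cycle_rot n k a, cycle_rot n k b) \<in> cycle_E n"
    using assms ab by (simp add: cycle_E_iff cycle_rot_lt cycle_rot_succ)
qed

lemma path_colourable_if_not_onto:
  assumes n: "3 \<le> n" and f: "full_hom S F (cycle_V n) (cycle_E n) f"
    and k: "k < n" "k \<notin> f ` S"
  shows "full_colourable S F (path_V (n - 1)) (path_E (n - 1))"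
proof -
  let ?g = "cycle_rot n k \<circ> f"
  have g: "full_hom S F (cycle_V n) (cycle_E n) ?g"
    using full_hom_comp[OF f full_hom_cycle_rot[OF n k(1)]] .
  have "?g ` S \<subseteq> path_V (n - 1)"
  proof
    fix c
    assume "c \<in> ?g ` S"
    then obtain x where x: "x \<in> S" "c = cycle_rot n k (f x)"
      by auto
    have "f x < n" "f x \<noteq> k"
      using f x k by (auto simp: full_hom_def cycle_V_def)
    then have "cycle_rot n k (f x) \<noteq> cycle_rot n k k"
      using inj_onD[OF cycle_rot_inj[OF k(1)], of "f x" k] k(1) by auto
    then have "cycle_rot n k (f x) \<noteq> n - 1"
      using cycle_rot_self[OF k(1)] by simp
    moreover have "cycle_rot n k (f x) < n"
      using k \<open>f x < n\<close> by (simp add: cycle_rot_lt)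
    ultimately show "c \<in> path_V (n - 1)"
      using x by (simp add: path_V_def)
  qed
  then have "full_hom S F (path_V (n - 1)) (path_E (n - 1)) ?g"
    using g full_hom_induced_subgraph_iff[OF path_V_subset[of n], of S F "cycle_E n" ?g] path_E_eq[OF n]
    by simp
  then show ?thesis
    by (auto simp: full_colourable_def)
qed

lemma full_hom_Restr_edge_iff:
  "full_hom T (Restr E T) VH EH f \<Longrightarrow> x \<in> T \<Longrightarrow> y \<in> T \<Longrightarrow> (x, y) \<in> E \<longleftrightarrow> (f x, f y) \<in> EH"
  by (auto simp: full_hom_def)

lemma full_hom_Image_eq_if_same_colour:
  assumes f: "full_hom T (Restr E T) VH EH f" and "u \<in> T" "v \<in> T" "f u = f v" "A \<subseteq> T"
  shows "E `` {u} \<inter> A = E `` {v} \<inter> A"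
proof -
  have "(u, w) \<in> E \<longleftrightarrow> (v, w) \<in> E" if "w \<in> A" for w
    using full_hom_Restr_edge_iff[OF f] assms that by (metis subsetD)
  then show ?thesis
    by blast
qed

lemma card_Image_eq_1_iff_adjacent_missing:
  assumes n: "3 \<le> n" and h: "inj_on h W" "h ` W = {0..<n} - {m}"
    and edge_iff: "\<And>u v. u \<in> W \<Longrightarrow> v \<in> W \<Longrightarrow> (u, v) \<in> E \<longleftrightarrow> (h u, h v) \<in> cycle_E n"
    and w: "w \<in> W"
  shows "card (E `` {w} \<inter> W) = 1 \<longleftrightarrow> m \<in> cycle_E n `` {h w}"
proof -
  have "h ` (E `` {w} \<inter> W) = cycle_E n `` {h w} - {m}"
  proof
    show "h ` (E `` {w} \<inter> W) \<subseteq> cycle_E n `` {h w} - {m}"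
      using h(2) edge_iff w by auto
    show "cycle_E n `` {h w} - {m} \<subseteq> h ` (E `` {w} \<inter> W)"
    proof
      fix c
      assume c: "c \<in> cycle_E n `` {h w} - {m}"
      then have "c \<in> h ` W"
        using h(2) cycle_E_Image_subset by blast
      then show "c \<in> h ` (E `` {w} \<inter> W)"
        using c edge_iff w by auto
    qed
  qed
  then have "card (E `` {w} \<inter> W) = card (cycle_E n `` {h w} - {m})"
    by (metis card_image h(1) inj_on_subset inf_le2)
  moreover have "h w \<in> {0..<n} - {m}"
    using h(2) w by blast
  ultimately show ?thesis
    using card_cycle_E_Image_Diff_eq_1_iff[OF n] by simp
qed

section \<open>Induced cycles and twins\<close>

locale induced_cycle =
  fixes E :: "('a \<times> 'a) set" and Z :: "'a set" and \<phi> :: "'a \<Rightarrow> nat" and n :: nat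
  assumes bij: "bij_betw \<phi> Z {0..<n}"
    and edge_iff: "x \<in> Z \<Longrightarrow> y \<in> Z \<Longrightarrow> (x, y) \<in> E \<longleftrightarrow> (\<phi> x, \<phi> y) \<in> cycle_E n"

lemma graph_iso_cycle_iff: "graph_iso V E (cycle_V n) (cycle_E n) \<longleftrightarrow> (\<exists>\<phi>. induced_cycle E V \<phi> n)"
  unfolding graph_iso_def induced_cycle_def cycle_V_def by blast

lemma induced_cycle_Restr_iff:
  "Z \<subseteq> S \<Longrightarrow> induced_cycle (Restr E S) Z \<phi> n \<longleftrightarrow> induced_cycle E Z \<phi> n"
  unfolding induced_cycle_def by blast

lemma induced_cycle_if_full_hom_onto:
  assumes f: "full_hom S F (cycle_V n) (cycle_E n) f" and onto: "f ` S = cycle_V n"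
  shows "\<exists>Z \<subseteq> S. induced_cycle F Z f n"
proof (intro exI conjI)
  let ?Z = "inv_into S f ` {0..<n}"
  show "?Z \<subseteq> S"
    using onto by (auto simp: cycle_V_def inv_into_into)
  have "f ` ?Z = {0..<n}"
    using onto by (simp add: image_inv_into_cancel cycle_V_def)
  moreover have "inj_on f ?Z"
    using onto by (auto simp: inj_on_def cycle_V_def f_inv_into_f)
  moreover have "\<forall>x\<in>?Z. \<forall>y\<in>?Z. (x, y) \<in> F \<longleftrightarrow> (f x, f y) \<in> cycle_E n"
    using f \<open>?Z \<subseteq> S\<close> unfolding full_hom_def by blast
  ultimately show "induced_cycle F ?Z f n"
    unfolding induced_cycle_def bij_betw_def by blast
qed

context induced_cycle
begin

lemma phi_inj: "inj_on \<phi> Z"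
  using bij by (simp add: bij_betw_def)

lemma phi_image: "\<phi> ` Z = {0..<n}"
  using bij by (simp add: bij_betw_def)

lemma phi_lt: "x \<in> Z \<Longrightarrow> \<phi> x < n"
  using phi_image by auto

lemma image_Diff_singleton: "A \<subseteq> Z \<Longrightarrow> z \<in> Z \<Longrightarrow> \<phi> ` (A - {z}) = \<phi> ` A - {\<phi> z}"
  using inj_on_image_set_diff[OF phi_inj, of A "{z}"] by auto

lemma full_hom: "full_hom Z E (cycle_V n) (cycle_E n) \<phi>"
  using phi_image edge_iff by (simp add: full_hom_def cycle_V_def)

lemma image_Image:
  assumes "A \<subseteq> Z" "u \<in> Z"
  shows "\<phi> ` (E `` {u} \<inter> A) = cycle_E n `` {\<phi> u} \<inter> \<phi> ` A"
  using assms edge_iff phi_inj by (auto simp: inj_on_def)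

end

definition twin_in :: "('a \<times> 'a) set \<Rightarrow> 'a set \<Rightarrow> 'a \<Rightarrow> 'a \<Rightarrow> bool" where
  "twin_in E Z x a \<longleftrightarrow> a \<in> Z \<and> E `` {x} \<inter> Z = E `` {a} \<inter> Z"

lemma twin_in_refl: "a \<in> Z \<Longrightarrow> twin_in E Z a a"
  by (simp add: twin_in_def)

lemma twin_in_Image_eq: "twin_in E Z x a \<Longrightarrow> A \<subseteq> Z \<Longrightarrow> E `` {x} \<inter> A = E `` {a} \<inter> A"
  unfolding twin_in_def by blast

lemma twin_in_edge_iff: "twin_in E Z x a \<Longrightarrow> w \<in> Z \<Longrightarrow> (x, w) \<in> E \<longleftrightarrow> (a, w) \<in> E"
  unfolding twin_in_def by blast

lemma (in induced_cycle) induced_cycle_swap_twin: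
  assumes sym: "sym E" and irrefl: "\<forall>y. (y, y) \<notin> E"
    and twin: "twin_in E Z x a" and x: "x \<notin> Z"
  shows "induced_cycle E (insert x (Z - {a})) (\<phi>(x := \<phi> a)) n"
proof
  let ?Z' = "insert x (Z - {a})" and ?s = "\<lambda>u. if u = x then a else u"
  have a: "a \<in> Z"
    using twin by (simp add: twin_in_def)
  have s: "?s ` ?Z' = Z" "inj_on ?s ?Z'"
    using a x by (auto simp: inj_on_def)
  then have "bij_betw ?s ?Z' Z"
    unfolding bij_betw_def by blast
  then have "bij_betw (\<phi> \<circ> ?s) ?Z' {0..<n}"
    using bij_betw_trans bij by blast
  then show "bij_betw (\<phi>(x := \<phi> a)) ?Z' {0..<n}"
    by (rule bij_betw_cong[THEN iffD1, rotated]) auto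
  fix u v
  assume uv: "u \<in> ?Z'" "v \<in> ?Z'"
  have "(u, v) \<in> E \<longleftrightarrow> (?s u, ?s v) \<in> E"
    using uv x irrefl twin_in_edge_iff[OF twin] sym[unfolded sym_def] by auto
  also have "\<dots> \<longleftrightarrow> (\<phi> (?s u), \<phi> (?s v)) \<in> cycle_E n"
    using uv s(1) by (intro edge_iff) auto
  finally show "(u, v) \<in> E \<longleftrightarrow> ((\<phi>(x := \<phi> a)) u, (\<phi>(x := \<phi> a)) v) \<in> cycle_E n"
    by (simp add: if_distrib)
qed

lemma (in induced_cycle) twin_off_if_missing_colour:
  assumes n: "3 \<le> n" and z: "z \<in> Z"
    and g: "inj_on g (Z - {z})" "g ` (Z - {z}) = {0..<n} - {m}"
    and g_edge: "\<And>u v. u \<in> Z - {z} \<Longrightarrow> v \<in> Z - {z} \<Longrightarrow> (u, v) \<in> E \<longleftrightarrow> (g u, g v) \<in> cycle_E n"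
    and x_edge: "\<And>w. w \<in> Z - {z} \<Longrightarrow> (x, w) \<in> E \<longleftrightarrow> (m, g w) \<in> cycle_E n"
  shows "E `` {x} \<inter> (Z - {z}) = E `` {z} \<inter> (Z - {z})"
proof -
  txt \<open>A vertex \<open>w\<close> of the path \<open>Z - {z}\<close> has exactly one neighbour on it iff it is adjacent
    to the colour missed by the embedding; this is read off once through \<open>g\<close> and once
    through \<open>\<phi>\<close>, which misses \<open>\<phi> z\<close>.\<close>
  have \<phi>: "\<phi> ` (Z - {z}) = {0..<n} - {\<phi> z}"
    using image_Diff_singleton[OF subset_refl z] phi_image by simp
  have \<phi>_edge: "\<And>u v. u \<in> Z - {z} \<Longrightarrow> v \<in> Z - {z} \<Longrightarrow> (u, v) \<in> E \<longleftrightarrow> (\<phi> u, \<phi> v) \<in> cycle_E n"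
    using edge_iff by blast
  have "(x, w) \<in> E \<longleftrightarrow> (z, w) \<in> E" if w: "w \<in> Z - {z}" for w
  proof -
    have "(x, w) \<in> E \<longleftrightarrow> card (E `` {w} \<inter> (Z - {z})) = 1"
      using x_edge[OF w] card_Image_eq_1_iff_adjacent_missing[OF n g g_edge w] cycle_E_sym by blast
    also have "\<dots> \<longleftrightarrow> (\<phi> z, \<phi> w) \<in> cycle_E n"
      using card_Image_eq_1_iff_adjacent_missing[OF n inj_on_subset[OF phi_inj Diff_subset] \<phi> \<phi>_edge w]
        cycle_E_sym by blast
    also have "\<dots> \<longleftrightarrow> (z, w) \<in> E"
      using edge_iff w z by auto
    finally show ?thesis .
  qed
  then show ?thesis
    by blast
qed

locale induced_long_cycle = induced_cycle +
  assumes long: "5 \<le> n"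
begin

lemma eq_if_Image_Diff_eq:
  assumes "a \<in> Z" "u \<in> Z" "v \<in> Z" and eq: "E `` {u} \<inter> (Z - {a}) = E `` {v} \<inter> (Z - {a})"
  shows "u = v"
proof -
  have Za: "\<phi> ` (Z - {a}) = {0..<n} - {\<phi> a}"
    using image_Diff_singleton[OF subset_refl \<open>a \<in> Z\<close>] phi_image by simp
  have "cycle_E n `` {\<phi> u} \<inter> ({0..<n} - {\<phi> a}) = cycle_E n `` {\<phi> v} \<inter> ({0..<n} - {\<phi> a})"
    using arg_cong[OF eq, of "image \<phi>"]
    unfolding image_Image[OF Diff_subset \<open>u \<in> Z\<close>] image_Image[OF Diff_subset \<open>v \<in> Z\<close>] Za .
  then have "cycle_E n `` {\<phi> u} - {\<phi> a} = cycle_E n `` {\<phi> v} - {\<phi> a}"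
    using cycle_E_Image_subset[of n "\<phi> u"] cycle_E_Image_subset[of n "\<phi> v"] by blast
  then have "\<phi> u = \<phi> v"
    by (rule cycle_E_Image_Diff_inj[OF long phi_lt[OF \<open>u \<in> Z\<close>] phi_lt[OF \<open>v \<in> Z\<close>]])
  then show ?thesis
    using phi_inj assms by (simp add: inj_on_eq_iff)
qed

lemma eq_if_Image_eq:
  assumes "u \<in> Z" "v \<in> Z" "E `` {u} \<inter> Z = E `` {v} \<inter> Z"
  shows "u = v"
  by (rule eq_if_Image_Diff_eq[OF assms(1,1,2)]) (use assms(3) in blast)

lemma twin_in_unique: "twin_in E Z x a \<Longrightarrow> twin_in E Z x b \<Longrightarrow> a = b"
  by (rule eq_if_Image_eq) (auto simp: twin_in_def)

lemma bij_betw_if_full_hom: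
  assumes T: "Z \<subseteq> T" and g: "full_hom T (Restr E T) (cycle_V n) (cycle_E n) g"
  shows "bij_betw g Z (cycle_V n)"
proof -
  have "inj_on g Z"
  proof (rule inj_onI)
    fix u v
    assume "u \<in> Z" "v \<in> Z" "g u = g v"
    then have "E `` {u} \<inter> Z = E `` {v} \<inter> Z"
      using full_hom_Image_eq_if_same_colour[OF g] T by (meson subsetD)
    then show "u = v"
      using eq_if_Image_eq \<open>u \<in> Z\<close> \<open>v \<in> Z\<close> by blast
  qed
  moreover have "card Z = card (cycle_V n)"
    using bij_betw_same_card[OF bij] by (simp add: cycle_V_def)
  moreover have "g ` Z \<subseteq> cycle_V n"
    using g T by (auto simp: full_hom_def)
  ultimately show ?thesis
    by (simp add: bij_betw_def card_image card_subset_eq cycle_V_def)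
qed

lemma twin_in_if_full_hom:
  assumes T: "Z \<subseteq> T" and g: "full_hom T (Restr E T) (cycle_V n) (cycle_E n) g" and x: "x \<in> T"
  shows "\<exists>a. twin_in E Z x a \<and> g a = g x"
proof -
  have "g x \<in> g ` Z"
    using bij_betw_imp_surj_on[OF bij_betw_if_full_hom[OF T g]] g x by (auto simp: full_hom_def)
  then obtain a where a: "a \<in> Z" "g a = g x"
    by auto
  then have "E `` {x} \<inter> Z = E `` {a} \<inter> Z"
    using full_hom_Image_eq_if_same_colour[OF g x _ a(2)[symmetric] T] a(1) T by blast
  then have "twin_in E Z x a"
    using a by (simp add: twin_in_def)
  then show ?thesis
    using a by blast
qed

lemma twin_swap_cases:
  assumes a: "twin_in E Z x a" and b: "twin_in E Z y b" and c: "c \<in> insert x (Z - {a})"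
    and yc: "E `` {y} \<inter> (Z - {a}) = E `` {c} \<inter> (Z - {a})"
  shows "c = x \<and> a = b \<or> c = b"
proof -
  have "a \<in> Z" "b \<in> Z"
    using a b by (auto simp: twin_in_def)
  have xa: "E `` {x} \<inter> (Z - {a}) = E `` {a} \<inter> (Z - {a})"
   and yb: "E `` {y} \<inter> (Z - {a}) = E `` {b} \<inter> (Z - {a})"
    using twin_in_Image_eq[OF a Diff_subset] twin_in_Image_eq[OF b Diff_subset] by simp_all
  show ?thesis
  proof (cases "c = x")
    case True
    then have "E `` {a} \<inter> (Z - {a}) = E `` {b} \<inter> (Z - {a})"
      using xa yb yc by simp
    then show ?thesis
      using eq_if_Image_Diff_eq[OF \<open>a \<in> Z\<close> \<open>a \<in> Z\<close> \<open>b \<in> Z\<close>] True by simp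
  next
    case False
    then have "c \<in> Z - {a}"
      using c by simp
    moreover have "E `` {c} \<inter> (Z - {a}) = E `` {b} \<inter> (Z - {a})"
      using yb yc by simp
    ultimately show ?thesis
      using eq_if_Image_Diff_eq[OF \<open>a \<in> Z\<close> _ \<open>b \<in> Z\<close>] by blast
  qed
qed

lemma not_path_colourable:
  assumes T: "Z \<subseteq> T"
  shows "\<not> full_colourable T (Restr E T) (path_V (n - 1)) (path_E (n - 1))"
proof
  assume "full_colourable T (Restr E T) (path_V (n - 1)) (path_E (n - 1))"
  then obtain h where h: "full_hom T (Restr E T) (path_V (n - 1)) (path_E (n - 1)) h"
    by (auto simp: full_colourable_def)
  then have "h ` Z = cycle_V n"
    using bij_betw_if_full_hom[OF T full_hom_path_imp_cycle] long by (simp add: bij_betw_def)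
  moreover have "h ` Z \<subseteq> path_V (n - 1)"
    using h T by (auto simp: full_hom_def)
  moreover have "n - 1 \<in> cycle_V n"
    using long by (simp add: cycle_V_def)
  ultimately show False
    by (auto simp: path_V_def)
qed

end

section \<open>Extending colourings from an induced cycle\<close>

locale cycle_colouring_extension = induced_long_cycle +
  fixes V :: "'a set"
  assumes graph: "is_graph V E" and Z_subset: "Z \<subseteq> V"
    and proper_colourable: "\<And>S. S \<subset> V \<Longrightarrow> full_colourable S (Restr E S) (cycle_V n) (cycle_E n)"
begin

lemma colouring_Diff_singleton:
  assumes "z \<in> V"
  obtains g where "full_hom (V - {z}) (Restr E (V - {z})) (cycle_V n) (cycle_E n) g"
  using proper_colourable[of "V - {z}"] assms by (auto simp: full_colourable_def)

lemma twin_off_exists: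
  assumes x: "x \<in> V - Z" and z: "z \<in> Z"
  shows "\<exists>q\<in>Z. E `` {x} \<inter> (Z - {z}) = E `` {q} \<inter> (Z - {z})"
proof -
  let ?T = "V - {z}" and ?W = "Z - {z}"
  obtain g where g: "full_hom ?T (Restr E ?T) (cycle_V n) (cycle_E n) g"
    using colouring_Diff_singleton z Z_subset by blast
  have W: "?W \<subseteq> ?T" "x \<in> ?T"
    using Z_subset x z by auto
  have g_edge: "\<And>u v. u \<in> ?W \<Longrightarrow> v \<in> ?W \<Longrightarrow> (u, v) \<in> E \<longleftrightarrow> (g u, g v) \<in> cycle_E n"
    using full_hom_Restr_edge_iff[OF g] W(1) by blast
  have inj_g: "inj_on g ?W"
  proof (rule inj_onI)
    fix u v
    assume uv: "u \<in> ?W" "v \<in> ?W" "g u = g v"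
    then have "E `` {u} \<inter> ?W = E `` {v} \<inter> ?W"
      using W(1) by (intro full_hom_Image_eq_if_same_colour[OF g]) auto
    then show "u = v"
      using uv by (intro eq_if_Image_Diff_eq[OF z]) auto
  qed
  show ?thesis
  proof (cases "g x \<in> g ` ?W")
    case True
    then obtain q where q: "q \<in> ?W" "g q = g x"
      by (metis imageE)
    then have "E `` {x} \<inter> ?W = E `` {q} \<inter> ?W"
      using W by (intro full_hom_Image_eq_if_same_colour[OF g]) auto
    then show ?thesis
      using q(1) by blast
  next
    case False
    define m where "m = g x"
    have "m < n"
      using g W(2) by (auto simp: full_hom_def cycle_V_def m_def)
    have "g ` ?W \<subseteq> {0..<n}"
      using g W(1) by (auto simp: full_hom_def cycle_V_def)
    then have "g ` ?W \<subseteq> {0..<n} - {m}"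
      using False unfolding m_def by blast
    moreover have "card (g ` ?W) = card ({0..<n} - {m})"
      using card_image[OF inj_g] bij_betw_same_card[OF bij] z \<open>m < n\<close> by simp
    ultimately have gW: "g ` ?W = {0..<n} - {m}"
      by (simp add: card_subset_eq)
    have "(x, w) \<in> E \<longleftrightarrow> (m, g w) \<in> cycle_E n" if "w \<in> ?W" for w
      using full_hom_Restr_edge_iff[OF g W(2)] that W(1) by (auto simp: m_def)
    then show ?thesis
      using twin_off_if_missing_colour[OF _ z inj_g gW g_edge] long z by auto
  qed
qed

lemma twin_exists:
  assumes x: "x \<in> V"
  shows "\<exists>a. twin_in E Z x a"
proof (cases "x \<in> Z")
  case True
  then show ?thesis
    using twin_in_refl[OF True] by blast
next
  case False
  let ?N = "\<phi> ` (E `` {x} \<inter> Z)"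
  have almost: "\<exists>q<n. ?N - {p} = cycle_E n `` {q} - {p}" if p: "p < n" for p
  proof -
    define z where "z = inv_into Z \<phi> p"
    have z: "z \<in> Z" "\<phi> z = p"
      using p phi_image by (auto simp: z_def inv_into_into f_inv_into_f)
    obtain q where q: "q \<in> Z" "E `` {x} \<inter> (Z - {z}) = E `` {q} \<inter> (Z - {z})"
      using twin_off_exists[OF _ z(1)] x False by blast
    have "?N - {p} = \<phi> ` (E `` {x} \<inter> (Z - {z}))"
      using image_Diff_singleton[of "E `` {x} \<inter> Z" z] z by (simp add: Int_Diff)
    also have "\<dots> = cycle_E n `` {\<phi> q} \<inter> ({0..<n} - {p})"
      using q image_Image[OF Diff_subset q(1)] image_Diff_singleton[OF subset_refl z(1)] phi_image z(2)
      by simp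
    also have "\<dots> = cycle_E n `` {\<phi> q} - {p}"
      using cycle_E_Image_subset[of n "\<phi> q"] by blast
    finally show ?thesis
      using phi_lt[OF q(1)] by blast
  qed
  have "?N \<subseteq> {0..<n}"
    using phi_image by auto
  then obtain k where k: "k < n" "?N = cycle_E n `` {k}"
    using cycle_E_Image_if_almost[OF long _ almost] by blast
  define a where "a = inv_into Z \<phi> k"
  have a: "a \<in> Z" "\<phi> a = k"
    using k(1) phi_image by (auto simp: a_def inv_into_into f_inv_into_f)
  have "?N = \<phi> ` (E `` {a} \<inter> Z)"
    using k(2) image_Image[OF subset_refl a(1)] phi_image a(2) cycle_E_Image_subset[of n k]
    by (simp add: Int_absorb2)
  then have "E `` {x} \<inter> Z = E `` {a} \<inter> Z"
    using phi_inj by (simp add: inj_on_image_eq_iff)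
  then show ?thesis
    unfolding twin_in_def using a(1) by blast
qed

lemma twin_edge_iff_outside:
  assumes x: "x \<in> V - Z" and y: "y \<in> V - Z"
    and a: "twin_in E Z x a" and b: "twin_in E Z y b"
  shows "(x, y) \<in> E \<longleftrightarrow> (a, b) \<in> E"
proof -
  have sym: "sym E" and irrefl: "\<forall>v. (v, v) \<notin> E"
    using graph by (auto simp: is_graph_def)
  have "a \<in> Z" "b \<in> Z"
    using a b by (auto simp: twin_in_def)
  let ?T = "V - {a}" and ?Z' = "insert x (Z - {a})"
  obtain g where g: "full_hom ?T (Restr E ?T) (cycle_V n) (cycle_E n) g"
    using colouring_Diff_singleton \<open>a \<in> Z\<close> Z_subset by blast
  txt \<open>Exchanging \<open>x\<close> for its twin \<open>a\<close> gives an induced \<open>C\<^sub>n\<close> inside \<open>G - a\<close>, whose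
    colouring \<open>g\<close> then compares \<open>y\<close> with \<open>x\<close> itself.\<close>
  interpret Z': induced_long_cycle E ?Z' "\<phi>(x := \<phi> a)" n
    using induced_cycle_swap_twin[OF sym irrefl a] x long
    by (simp add: induced_long_cycle_def induced_long_cycle_axioms_def)
  have "?Z' \<subseteq> ?T" "x \<in> ?T" "y \<in> ?T"
    using Z_subset x y \<open>a \<in> Z\<close> by auto
  then obtain c where c: "twin_in E ?Z' y c" "g c = g y"
    using Z'.twin_in_if_full_hom[OF _ g, of y] by blast
  have "c \<in> ?T"
    using c(1) \<open>?Z' \<subseteq> ?T\<close> unfolding twin_in_def by blast
  then have xy: "(x, y) \<in> E \<longleftrightarrow> (x, c) \<in> E"
    using full_hom_Restr_edge_iff[OF g] \<open>x \<in> ?T\<close> \<open>y \<in> ?T\<close> c(2) by metis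
  have "E `` {y} \<inter> (Z - {a}) = E `` {c} \<inter> (Z - {a})"
    using twin_in_Image_eq[OF c(1) subset_insertI] .
  then have "c = x \<and> a = b \<or> c = b"
    using twin_swap_cases[OF a b] c(1) by (simp add: twin_in_def)
  then show ?thesis
    using xy irrefl twin_in_edge_iff[OF a \<open>b \<in> Z\<close>] by auto
qed

lemma twin_edge_iff:
  assumes x: "x \<in> V" and y: "y \<in> V" and a: "twin_in E Z x a" and b: "twin_in E Z y b"
  shows "(x, y) \<in> E \<longleftrightarrow> (a, b) \<in> E"
proof (cases "x \<in> Z")
  case True
  have "sym E"
    using graph by (simp add: is_graph_def)
  have "x = a"
    using twin_in_unique[OF twin_in_refl[OF True] a] .
  moreover have "(y, x) \<in> E \<longleftrightarrow> (b, x) \<in> E"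
    using twin_in_edge_iff[OF b True] .
  ultimately show ?thesis
    using \<open>sym E\<close> by (meson symD)
next
  case xZ: False
  show ?thesis
  proof (cases "y \<in> Z")
    case True
    then show ?thesis
      using twin_in_unique[OF twin_in_refl[OF True] b] twin_in_edge_iff[OF a True] by simp
  next
    case False
    then show ?thesis
      using twin_edge_iff_outside x y xZ a b by blast
  qed
qed

theorem full_colourable: "full_colourable V E (cycle_V n) (cycle_E n)"
proof -
  define tw where "tw x = (SOME a. twin_in E Z x a)" for x
  have tw: "twin_in E Z x (tw x)" if "x \<in> V" for x
    unfolding tw_def using twin_exists[OF that] by (rule someI_ex)
  then have tw_Z: "tw x \<in> Z" if "x \<in> V" for x
    using that by (simp add: twin_in_def)
  have "full_hom V E (cycle_V n) (cycle_E n) (\<phi> \<circ> tw)"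
    unfolding full_hom_def
  proof (intro conjI ballI)
    show "(\<phi> \<circ> tw) ` V \<subseteq> cycle_V n"
      using tw_Z phi_lt by (auto simp: cycle_V_def)
    fix x y
    assume "x \<in> V" "y \<in> V"
    then show "(x, y) \<in> E \<longleftrightarrow> ((\<phi> \<circ> tw) x, (\<phi> \<circ> tw) y) \<in> cycle_E n"
      using twin_edge_iff[OF _ _ tw tw] edge_iff tw_Z by simp
  qed
  then show ?thesis
    unfolding full_colourable_def by blast
qed

end

section \<open>Minimal obstructions\<close>

lemma full_hom_Restr: "full_hom V E VH EH f \<Longrightarrow> S \<subseteq> V \<Longrightarrow> full_hom S (Restr E S) VH EH f"
  by (auto simp: full_hom_def)

lemma cycle_colourable_if_iso:
  "graph_iso V E (cycle_V n) (cycle_E n) \<Longrightarrow> full_colourable V E (cycle_V n) (cycle_E n)"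
  unfolding graph_iso_cycle_iff full_colourable_def using induced_cycle.full_hom by blast

lemma cycle_colourable_if_path_colourable:
  "3 \<le> n \<Longrightarrow> full_colourable S F (path_V (n - 1)) (path_E (n - 1)) \<Longrightarrow>
     full_colourable S F (cycle_V n) (cycle_E n)"
  unfolding full_colourable_def using full_hom_path_imp_cycle by blast

lemma cycle_colourable_cases:
  assumes n: "3 \<le> n" and col: "full_colourable S F (cycle_V n) (cycle_E n)"
  shows "full_colourable S F (path_V (n - 1)) (path_E (n - 1)) \<or> (\<exists>Z \<subseteq> S. \<exists>\<phi>. induced_cycle F Z \<phi> n)"
proof -
  obtain f where f: "full_hom S F (cycle_V n) (cycle_E n) f"
    using col by (auto simp: full_colourable_def)
  show ?thesis
  proof (cases "f ` S = cycle_V n")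
    case True
    then show ?thesis
      using induced_cycle_if_full_hom_onto[OF f] by blast
  next
    case False
    moreover have "f ` S \<subseteq> cycle_V n"
      using f by (simp add: full_hom_def)
    ultimately obtain k where "k \<in> cycle_V n - f ` S"
      by blast
    then have "k < n" "k \<notin> f ` S"
      by (auto simp: cycle_V_def)
    then show ?thesis
      using path_colourable_if_not_onto[OF n f] by blast
  qed
qed

lemma min_obstruction_path_if_cycle:
  assumes n: "5 \<le> n" and obs: "min_obstruction V E (cycle_V n) (cycle_E n)"
  shows "min_obstruction V E (path_V (n - 1)) (path_E (n - 1))"
proof -
  have graph: "is_graph V E" and not_col: "\<not> full_colourable V E (cycle_V n) (cycle_E n)"
    and proper: "\<And>S. S \<subset> V \<Longrightarrow> full_colourable S (Restr E S) (cycle_V n) (cycle_E n)"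
    using obs by (auto simp: min_obstruction_def)
  have "full_colourable S (Restr E S) (path_V (n - 1)) (path_E (n - 1))" if S: "S \<subset> V" for S
  proof (rule ccontr)
    assume "\<not> ?thesis"
    then obtain Z \<phi> where "Z \<subseteq> S" "induced_cycle (Restr E S) Z \<phi> n"
      using cycle_colourable_cases[OF _ proper[OF S]] n by auto
    then have "induced_cycle E Z \<phi> n"
      by (simp add: induced_cycle_Restr_iff)
    then have "cycle_colouring_extension E Z \<phi> n V"
      using n graph proper S \<open>Z \<subseteq> S\<close>
      by (intro cycle_colouring_extension.intro induced_long_cycle.intro
          induced_long_cycle_axioms.intro cycle_colouring_extension_axioms.intro) auto
    then show False
      using cycle_colouring_extension.full_colourable not_col by blast
  qed
  moreover have "\<not> full_colourable V E (path_V (n - 1)) (path_E (n - 1))"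
    using not_col cycle_colourable_if_path_colourable[of n V E] n by auto
  ultimately show ?thesis
    using graph by (simp add: min_obstruction_def)
qed

lemma min_obstruction_cycle_if_path:
  assumes n: "5 \<le> n" and obs: "min_obstruction V E (path_V (n - 1)) (path_E (n - 1))"
    and not_iso: "\<not> graph_iso V E (cycle_V n) (cycle_E n)"
  shows "min_obstruction V E (cycle_V n) (cycle_E n)"
proof -
  have n3: "3 \<le> n"
    using n by simp
  have graph: "is_graph V E" and not_col: "\<not> full_colourable V E (path_V (n - 1)) (path_E (n - 1))"
    and proper: "\<And>S. S \<subset> V \<Longrightarrow> full_colourable S (Restr E S) (path_V (n - 1)) (path_E (n - 1))"
    using obs by (auto simp: min_obstruction_def)
  have "\<not> full_colourable V E (cycle_V n) (cycle_E n)"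
  proof
    assume "full_colourable V E (cycle_V n) (cycle_E n)"
    then obtain Z \<phi> where Z: "Z \<subseteq> V" "induced_cycle E Z \<phi> n"
      using cycle_colourable_cases[OF n3] not_col by blast
    then interpret induced_long_cycle E Z \<phi> n
      by (intro induced_long_cycle.intro induced_long_cycle_axioms.intro n)
    show False
    proof (cases "Z = V")
      case True
      then show False
        using Z(2) not_iso by (auto simp: graph_iso_cycle_iff)
    next
      case False
      then have "Z \<subset> V"
        using Z(1) by blast
      then show False
        using proper not_path_colourable[OF subset_refl] by blast
    qed
  qed
  moreover have "full_colourable S (Restr E S) (cycle_V n) (cycle_E n)" if "S \<subset> V" for S
    using cycle_colourable_if_path_colourable[OF n3 proper[OF that]] .
  ultimately show ?thesis
    using graph by (simp add: min_obstruction_def)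
qed

lemma min_obstruction_path_if_iso:
  assumes n: "5 \<le> n" and graph: "is_graph V E" and iso: "graph_iso V E (cycle_V n) (cycle_E n)"
  shows "min_obstruction V E (path_V (n - 1)) (path_E (n - 1))"
proof -
  obtain \<phi> where "induced_cycle E V \<phi> n"
    using iso by (auto simp: graph_iso_cycle_iff)
  then interpret induced_long_cycle E V \<phi> n
    by (intro induced_long_cycle.intro induced_long_cycle_axioms.intro n)
  have "Restr E V = E"
    using graph by (auto simp: is_graph_def)
  then have "\<not> full_colourable V E (path_V (n - 1)) (path_E (n - 1))"
    using not_path_colourable[OF subset_refl] by simp
  moreover have "full_colourable S (Restr E S) (path_V (n - 1)) (path_E (n - 1))" if S: "S \<subset> V" for S
  proof -
    obtain v where v: "v \<in> V - S"
      using S by blast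
    then have "\<phi> v \<notin> \<phi> ` S"
      using S phi_inj by (auto dest: inj_onD)
    moreover have "full_hom S (Restr E S) (cycle_V n) (cycle_E n) \<phi>"
      using full_hom_Restr[OF full_hom] S by blast
    ultimately show ?thesis
      using path_colourable_if_not_onto[of n S "Restr E S" \<phi> "\<phi> v"] phi_lt v n by simp
  qed
  ultimately show ?thesis
    using graph by (simp add: min_obstruction_def)
qed

theorem corollary3p9:
  fixes n :: nat and V :: "'a set" and E :: "('a \<times> 'a) set"
  assumes "n \<ge> 5"
  shows "(min_obstruction V E (cycle_V n) (cycle_E n) \<longleftrightarrow>
            min_obstruction V E (path_V (n - 1)) (path_E (n - 1)) \<and>
            \<not> graph_iso V E (cycle_V n) (cycle_E n))
       \<and> (min_obstruction V E (path_V (n - 1)) (path_E (n - 1)) \<longleftrightarrow>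
            min_obstruction V E (cycle_V n) (cycle_E n) \<or>
            (is_graph V E \<and> graph_iso V E (cycle_V n) (cycle_E n)))"
proof -
  have "min_obstruction V E (cycle_V n) (cycle_E n) \<Longrightarrow> \<not> graph_iso V E (cycle_V n) (cycle_E n)"
    using cycle_colourable_if_iso by (auto simp: min_obstruction_def)
  moreover have "min_obstruction V E (path_V (n - 1)) (path_E (n - 1)) \<Longrightarrow> is_graph V E"
    by (simp add: min_obstruction_def)
  ultimately show ?thesis
    using min_obstruction_path_if_cycle min_obstruction_cycle_if_path min_obstruction_path_if_iso assms
    by blast
qed

end
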